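(* Suppose the nearest neighbor algorithm (NNA) terminates normally and outputs the route $\mathcal{M}_2=(1,m_2^*,\dots,m_{L_2}^* )$ with $m_{L_2}^*=D$. Let $\mathcal{M}_1=(1,m_2,\dots,m_{L_1})$ with $m_{L_1}=D$ be any route from the source to the destination, where $L_1$ need not equal $L_2$. Then $R_{\mathrm{DF}}(\mathcal{M}_2)\ge R_{\mathrm{DF}}(\mathcal{M}_1)$.
   Context: Network: a finite set of nodes $\mathcal{S}=\{1,2,\dots,D\}$, $D\ge 2$. Node $1$ is the source and node $D$ is the destination. Received powers: for distinct nodes $i,t$, the power received at $t$ from $i$ is a positive real number $P_{it}$. All receivers have the same noise power $N>0$. Routes: a route is an ordered tuple of distinct nodes $\mathcal{M}=(m_1,\dots,m_L)$ with $m_1=1$ and $L\ge1$. It is a route from the source to the destination if moreover $m_L=D$. For $a\notin\mathcal{M}$, $\mathcal{M}\cup\{a\}$ denotes $(m_1,\dots,m_L,a)$. DF with independent codewords: the reception rate of node $m_t$ ($2\le t\le L$) in route $\mathcal{M}$ is $$R_{m_t}(\mathcal{M})=\tfrac12\log\Big(1+N^{-1}\sum_{i=1}^{t-1}P_{m_i m_t}\Big).$$ The supported DF rate (for $L\ge2$) is $R_{\mathrm{DF}}(\mathcal{M})=\min_{2\le t\le L}R_{m_t}(\mathcal{M})$. Nearest neighbor: node $i\notin\mathcal{M}$ is a nearest neighbor with respect to route $\mathcal{M}$ iff $P_{mi}\ge P_{mj}$ for all $m\in\mathcal{M}$ and all $j\in\mathcal{S}\setminus(\mathcal{M}\cup\{i\})$.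 NNA: 1. Start with $\mathcal{M}=(1)$. 2. If there is a unique nearest neighbor $i^*$ with respect to the current $\mathcal{M}$, set $\mathcal{M}\leftarrow\mathcal{M}\cup\{i^*\}$; otherwise the algorithm terminates prematurely. 3. Repeat step 2 until node $D$ has been appended, in which case the algorithm terminates normally and outputs $\mathcal{M}$. *)

theory Defs
  imports Complex_Main
begin

text \<open>Nodes are 1..D. A route is a list of distinct nodes starting with node 1.
  List positions are 0-based: position t corresponds to m_(t+1).\<close>

definition nodes :: "nat \<Rightarrow> nat set" where
  "nodes D = {1..D}"

definition is_route :: "nat \<Rightarrow> nat list \<Rightarrow> bool" where
  "is_route D M \<longleftrightarrow> M \<noteq> [] \<and> hd M = 1 \<and> distinct M \<and> set M \<subseteq> nodes D"

definition is_sd_route :: "nat \<Rightarrow> nat list \<Rightarrow> bool" where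
  "is_sd_route D M \<longleftrightarrow> is_route D M \<and> last M = D"

definition reception_rate :: "real \<Rightarrow> (nat \<Rightarrow> nat \<Rightarrow> real) \<Rightarrow> nat list \<Rightarrow> nat \<Rightarrow> real" where
  "reception_rate N P M t =
     (1/2) * log 2 (1 + (\<Sum>i<t. P (M ! i) (M ! t)) / N)"

text \<open>Supported DF rate: minimum over positions 2..L (1-based), i.e. 1..<length M.\<close>
definition R_DF :: "real \<Rightarrow> (nat \<Rightarrow> nat \<Rightarrow> real) \<Rightarrow> nat list \<Rightarrow> real" where
  "R_DF N P M = Min ((reception_rate N P M) ` {1..<length M})"

definition nearest_neighbor :: "nat \<Rightarrow> (nat \<Rightarrow> nat \<Rightarrow> real) \<Rightarrow> nat list \<Rightarrow> nat \<Rightarrow> bool" where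
  "nearest_neighbor D P M i \<longleftrightarrow>
     i \<in> nodes D - set M \<and>
     (\<forall>m\<in>set M. \<forall>j\<in>nodes D - (set M \<union> {i}). P m j \<le> P m i)"

inductive nna_run :: "nat \<Rightarrow> (nat \<Rightarrow> nat \<Rightarrow> real) \<Rightarrow> nat list \<Rightarrow> bool"
  for D :: nat and P :: "nat \<Rightarrow> nat \<Rightarrow> real" where
  start: "nna_run D P [1]"
| step: "\<lbrakk> nna_run D P M; D \<notin> set M; \<exists>!i. nearest_neighbor D P M i;
           nearest_neighbor D P M i \<rbrakk> \<Longrightarrow> nna_run D P (M @ [i])"

definition nna_output :: "nat \<Rightarrow> (nat \<Rightarrow> nat \<Rightarrow> real) \<Rightarrow> nat list \<Rightarrow> bool" where
  "nna_output D P M \<longleftrightarrow> nna_run D P M \<and> D \<in> set M"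

end

theory Submission
  imports Defs
begin

(* Let t be a bottleneck position of the NNA output M2, i.e. R_DF(M2) is the
   reception rate of a = M2!t, and let S be the set of nodes preceding a.
   Since the source lies in S but the destination does not, any route M1 from
   source to destination has a first node b = M1!k outside S, and all nodes
   before b lie in S.  Hence the power b receives in M1 is at most the total
   power b receives from S, which in turn is at most the power a receives from S,
   because a is a nearest neighbour of S.  As the rate is monotone in the
   received power, R_DF(M1) <= rate of b in M1 <= rate of a in M2 = R_DF(M2). *)

lemma nna_run_is_route:
  assumes "nna_run D P M" and "D \<ge> 1"
  shows "is_route D M"
  using assms
proof (induction rule: nna_run.induct)
  case start
  then show ?case by (simp add: is_route_def nodes_def)
next
  case (step M i)
  then have "i \<in> nodes D - set M" by (simp add: nearest_neighbor_def)
  with step show ?case by (auto simp: is_route_def)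
qed

lemma nna_run_prefix_nearest_neighbor:
  assumes "nna_run D P M" and "0 < t" and "t < length M"
  shows "nearest_neighbor D P (take t M) (M ! t)"
  using assms
proof (induction arbitrary: t rule: nna_run.induct)
  case start
  then show ?case by simp
next
  case (step M i)
  show ?case
  proof (cases "t < length M")
    case True
    then show ?thesis using step by (simp add: nth_append)
  next
    case False
    then have "t = length M" using step.prems by simp
    then show ?thesis using step.hyps by simp
  qed
qed

text \<open>The NNA stops as soon as the destination is appended, so the destination
  can only occur at the last position.\<close>
lemma nna_run_destination_not_in_butlast:
  assumes "nna_run D P M"
  shows "D \<notin> set (butlast M)"
  using assms by (induction rule: nna_run.induct) simp_all

lemma nna_output_prefix:
  assumes "nna_output D P M" and "D \<ge> 1" and "0 < t" and "t < length M"
  shows "nearest_neighbor D P (take t M) (M ! t)"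
    and "set (take t M) \<subseteq> nodes D"
    and "1 \<in> set (take t M)"
    and "D \<notin> set (take t M)"
proof -
  have run: "nna_run D P M" using assms(1) by (simp add: nna_output_def)
  then show "nearest_neighbor D P (take t M) (M ! t)"
    using assms(3,4) by (rule nna_run_prefix_nearest_neighbor)
  have route: "is_route D M" using run assms(2) by (rule nna_run_is_route)
  then show "set (take t M) \<subseteq> nodes D"
    using set_take_subset[of t M] by (auto simp: is_route_def)
  have "M \<noteq> []" using assms(4) by auto
  then have "take t M ! 0 = hd M" "0 < length (take t M)"
    using assms(3,4) by (simp_all add: hd_conv_nth)
  then show "1 \<in> set (take t M)"
    using route nth_mem[of 0 "take t M"] by (simp add: is_route_def)
  have "set (take t M) \<subseteq> set (butlast M)"
    using assms(4) by (simp add: take_butlast[symmetric] set_take_subset)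
  then show "D \<notin> set (take t M)"
    using nna_run_destination_not_in_butlast[OF run] by blast
qed

text \<open>A completed run contains the source and the destination D \<noteq> 1, hence at least two nodes.\<close>
lemma nna_output_length:
  assumes "nna_output D P M" and "D \<ge> 2"
  shows "2 \<le> length M"
proof -
  have "is_route D M" "D \<in> set M"
    using assms nna_run_is_route[of D P M] by (auto simp: nna_output_def)
  then show ?thesis
    using assms(2) by (cases M rule: remdups_adj.cases) (auto simp: is_route_def)
qed

lemma received_power_as_set_sum:
  assumes "distinct M" and "t \<le> length M"
  shows "(\<Sum>i<t. f (M ! i)) = (\<Sum>s\<in>set (take t M). f s)"
proof -
  have "set (take t M) = (!) M ` {..<t}"
    using assms(2) by (simp add: nth_image flip: atLeast0LessThan)
  moreover have "inj_on ((!) M) {..<t}"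
    using assms by (auto simp: inj_on_def nth_eq_iff_index_eq)
  ultimately show ?thesis by (simp add: sum.reindex)
qed

lemma route_first_exit:
  assumes "M \<noteq> []" and "M ! 0 \<in> S" and "last M \<notin> S"
  obtains k where "0 < k" "k < length M" "M ! k \<notin> S" "set (take k M) \<subseteq> S"
proof -
  have ex: "\<exists>k. k < length M \<and> M ! k \<notin> S"
    using assms by (intro exI[of _ "length M - 1"]) (simp add: last_conv_nth)
  define k where "k = (LEAST k. k < length M \<and> M ! k \<notin> S)"
  have k: "k < length M" "M ! k \<notin> S"
    using LeastI_ex[OF ex] by (simp_all add: k_def)
  have before: "M ! i \<in> S" if "i < k" for i
    using not_less_Least[OF that[unfolded k_def]] k(1) that by auto
  have "0 < k" using k(2) assms(2) by (cases k) auto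
  moreover have "set (take k M) \<subseteq> S"
    using before k(1) by (auto simp: in_set_conv_nth)
  ultimately show ?thesis using that k by blast
qed

lemma nearest_neighbor_receives_most:
  assumes "nearest_neighbor D P L a" and "b \<in> nodes D - set L" and "s \<in> set L"
  shows "P s b \<le> P s a"
  using assms by (cases "b = a") (auto simp: nearest_neighbor_def)

lemma rate_mono:
  assumes "N > 0" and "0 \<le> x" and "x \<le> y"
  shows "(1/2) * log 2 (1 + x / N) \<le> (1/2) * log 2 (1 + y / N)"
proof -
  have "x / N \<le> y / N" using assms by (simp add: divide_right_mono)
  moreover have "0 \<le> x / N" using assms by simp
  ultimately show ?thesis by simp
qed

lemma R_DF_attained:
  assumes "2 \<le> length M"
  obtains t where "t \<in> {1..<length M}" "R_DF N P M = reception_rate N P M t"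
proof -
  have "R_DF N P M \<in> reception_rate N P M ` {1..<length M}"
    unfolding R_DF_def using assms by (intro Min_in) auto
  then show ?thesis using that by blast
qed

lemma R_DF_le_reception_rate:
  assumes "t \<in> {1..<length M}"
  shows "R_DF N P M \<le> reception_rate N P M t"
  unfolding R_DF_def using assms by (intro Min_le) auto

lemma nearest_neighbor_dominates_route:
  assumes nn: "nearest_neighbor D P L a"
    and nonneg: "\<And>i j. i \<in> nodes D \<Longrightarrow> j \<in> nodes D \<Longrightarrow> i \<noteq> j \<Longrightarrow> 0 \<le> P i j"
    and L: "set L \<subseteq> nodes D"
    and M: "distinct M" "set M \<subseteq> nodes D" "M \<noteq> []" "M ! 0 \<in> set L" "last M \<notin> set L"
  obtains k where "k \<in> {1..<length M}"
    and "0 \<le> (\<Sum>i<k. P (M ! i) (M ! k))"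
    and "(\<Sum>i<k. P (M ! i) (M ! k)) \<le> (\<Sum>s\<in>set L. P s a)"
proof -
  obtain k where k: "0 < k" "k < length M" "M ! k \<notin> set L" "set (take k M) \<subseteq> set L"
    using route_first_exit[OF M(3-5)] by blast
  define b where "b = M ! k"
  have b: "b \<in> nodes D - set L" using k M(2) by (auto simp: b_def)
  have power_from_L_nonneg: "0 \<le> P s b" if "s \<in> set L" for s
    using nonneg[of s b] that b L by auto
  have sum_eq: "(\<Sum>i<k. P (M ! i) b) = (\<Sum>s\<in>set (take k M). P s b)"
    using received_power_as_set_sum[OF M(1), of k "\<lambda>s. P s b"] k(2) by simp
  have "(\<Sum>s\<in>set (take k M). P s b) \<le> (\<Sum>s\<in>set L. P s b)"
    using k(4) power_from_L_nonneg by (intro sum_mono2) auto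
  also have "\<dots> \<le> (\<Sum>s\<in>set L. P s a)"
    using nearest_neighbor_receives_most[OF nn b] by (intro sum_mono)
  finally have "(\<Sum>i<k. P (M ! i) b) \<le> (\<Sum>s\<in>set L. P s a)"
    using sum_eq by simp
  moreover have "0 \<le> (\<Sum>i<k. P (M ! i) b)"
    using sum_eq k(4) power_from_L_nonneg by (simp add: subset_iff sum_nonneg)
  ultimately show ?thesis using that k(1,2) by (simp add: b_def Suc_le_eq)
qed

theorem lemma4:
  fixes D :: nat and N :: real and P :: "nat \<Rightarrow> nat \<Rightarrow> real"
    and M1 M2 :: "nat list"
  assumes "D \<ge> 2"
    and "N > 0"
    and "\<And>i t. i \<in> nodes D \<Longrightarrow> t \<in> nodes D \<Longrightarrow> i \<noteq> t \<Longrightarrow> P i t > 0"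
    and "nna_output D P M2"
    and "is_sd_route D M1"
  shows "R_DF N P M2 \<ge> R_DF N P M1"
proof -
  have M2: "distinct M2"
    using assms(1,4) nna_run_is_route[of D P M2] by (simp add: nna_output_def is_route_def)
  obtain t where t: "t \<in> {1..<length M2}" "R_DF N P M2 = reception_rate N P M2 t"
    using nna_output_length[OF assms(4,1)] by (rule R_DF_attained)
  let ?L = "take t M2"
  have L: "nearest_neighbor D P ?L (M2 ! t)" "set ?L \<subseteq> nodes D" "1 \<in> set ?L" "D \<notin> set ?L"
    using nna_output_prefix[OF assms(4)] assms(1) t(1) by auto
  have M1: "distinct M1" "set M1 \<subseteq> nodes D" "M1 \<noteq> []" "M1 ! 0 \<in> set ?L" "last M1 \<notin> set ?L"
    using assms(5) L(3,4) by (auto simp: is_sd_route_def is_route_def hd_conv_nth)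
  have nonneg: "0 \<le> P i j" if "i \<in> nodes D" "j \<in> nodes D" "i \<noteq> j" for i j
    using assms(3)[OF that] by simp
  obtain k where k: "k \<in> {1..<length M1}" "0 \<le> (\<Sum>i<k. P (M1 ! i) (M1 ! k))"
      "(\<Sum>i<k. P (M1 ! i) (M1 ! k)) \<le> (\<Sum>s\<in>set ?L. P s (M2 ! t))"
    by (rule nearest_neighbor_dominates_route[OF L(1) nonneg L(2) M1])
  have "R_DF N P M1 \<le> reception_rate N P M1 k" using k(1) by (rule R_DF_le_reception_rate)
  also have "\<dots> \<le> reception_rate N P M2 t"
    using rate_mono[OF assms(2) k(2,3)] received_power_as_set_sum[OF M2, of t "\<lambda>s. P s (M2 ! t)"] t
    by (simp add: reception_rate_def)
  finally show ?thesis using t(2) by simp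
qed

end
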